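(* Let $N,t,r,K$ be integers with $t,r\ge1$, $m=t+r<N$, $K\ge N$, and let $n_0=K-(N-t)+1$. For $s\ge0$ and $(x,y)\in(0,1]^2$ define $$f(x,y;s)=f_\beta(x;n_0,r,0)\,f_\beta(y;K-(N-t)+r+1,N-t-r,0)\,e^{-s xy}\sum_{k=0}^{n_0}\binom{n_0}{k}\frac{(r-1)!}{(r+k-1)!}[s\,y(1-x)]^k$$ (the joint pdf of the maximal invariant $(p_1,p_2)$ under $H_1$ when $\mathrm{SINR}=s$; the pdf under $H_0$ is $f(x,y;0)$). Then the locally most powerful invariant detector statistic $$t_{\mathrm{LMPID}}=\frac{\left.\frac{\partial f(p_1,p_2;s)}{\partial s}\right|_{s=0}}{f(p_1,p_2;0)}$$ equals $$t_{\mathrm{LMPID}}=\frac{K-(N-t)+1}{r}\,p_2(1-p_1)-p_1p_2,$$ so that the LMPID is the decision rule comparing this quantity with a threshold $\eta$ (deciding $H_1$ when it exceeds $\eta$).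
   Context: $f_\beta(x;n,m,0)=\frac{(n+m-1)!}{(n-1)!(m-1)!}x^{n-1}(1-x)^{m-1}$ is the complex central beta pdf. Here $p_1=1/\bigl(1+\frac{m_1}{1+m_2}\bigr)$, $p_2=1/(1+m_2)$ with $m_1=\mathbf{z}_{2.3}^\dagger\mathbf{S}_{2.3}^{-1}\mathbf{z}_{2.3}$, $m_2=\mathbf{z}_3^\dagger\mathbf{S}_{33}^{-1}\mathbf{z}_3$, where $\mathbf{z}\in\mathbb{C}^N$ is partitioned into blocks $\mathbf{z}_1,\mathbf{z}_2,\mathbf{z}_3$ of sizes $t,r,N-m$, $\mathbf{S}$ (a Hermitian positive definite sample matrix) is partitioned conformably, $\mathbf{z}_{2.3}=\mathbf{z}_2-\mathbf{S}_{23}\mathbf{S}_{33}^{-1}\mathbf{z}_3$ and $\mathbf{S}_{2.3}=\mathbf{S}_{22}-\mathbf{S}_{23}\mathbf{S}_{33}^{-1}\mathbf{S}_{32}$; all that matters for the claim is that $(p_1,p_2)\in(0,1]^2$. *)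

theory Defs
  imports "HOL-Analysis.Analysis"
begin

definition fbeta :: "nat \<Rightarrow> nat \<Rightarrow> real \<Rightarrow> real" where
  "fbeta n m x = fact (n + m - 1) / (fact (n - 1) * fact (m - 1)) * x ^ (n - 1) * (1 - x) ^ (m - 1)"

definition fjoint :: "nat \<Rightarrow> nat \<Rightarrow> nat \<Rightarrow> nat \<Rightarrow> real \<Rightarrow> real \<Rightarrow> real \<Rightarrow> real" where
  "fjoint N t r K x y s =
     (let n0 = K - (N - t) + 1 in
      fbeta n0 r x * fbeta (K - (N - t) + r + 1) (N - t - r) y * exp (- s * x * y) *
      (\<Sum>k = 0..n0. real (n0 choose k) * fact (r - 1) / fact (r + k - 1) * (s * y * (1 - x)) ^ k))"

definition t_LMPID :: "nat \<Rightarrow> nat \<Rightarrow> nat \<Rightarrow> nat \<Rightarrow> real \<Rightarrow> real \<Rightarrow> real" where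
  "t_LMPID N t r K p1 p2 = deriv (\<lambda>s. fjoint N t r K p1 p2 s) 0 / fjoint N t r K p1 p2 0"

end

theory Submission
  imports Defs
begin

text \<open>As a function of \<open>s\<close>, the joint pdf is \<open>C exp(-s p\<^sub>1 p\<^sub>2) P(s)\<close>, where \<open>C\<close> is the
  product of the two beta densities and \<open>P\<close> is a polynomial in \<open>s p\<^sub>2 (1 - p\<^sub>1)\<close> with constant
  term \<open>1\<close> and linear coefficient \<open>n\<^sub>0 / r\<close>. The LMPID statistic is the logarithmic derivative
  at \<open>s = 0\<close>, in which \<open>C\<close> cancels, leaving \<open>(n\<^sub>0 / r) p\<^sub>2 (1 - p\<^sub>1) - p\<^sub>1 p\<^sub>2\<close>.\<close>

lemma sum_power_scaled_at_0:
  fixes a :: "nat \<Rightarrow> real"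
  shows "(\<Sum>k = 0..n. a k * (0 * c) ^ k) = a 0"
  by (simp add: power_0_left sum.atLeast_Suc_atMost)

lemma has_real_derivative_sum_power_scaled_at_0:
  fixes a :: "nat \<Rightarrow> real"
  assumes "n \<ge> 1"
  shows "((\<lambda>s. \<Sum>k = 0..n. a k * (s * c) ^ k) has_real_derivative a 1 * c) (at 0)"
proof -
  have "((\<lambda>s. \<Sum>k = 0..n. a k * (s * c) ^ k) has_real_derivative
         (\<Sum>k = 0..n. a k * (of_nat k * (0 * c) ^ (k - 1) * c))) (at 0)"
    by (auto intro!: derivative_eq_intros sum.cong simp: mult_ac)
  also have "(\<Sum>k = 0..n. a k * (of_nat k * (0 * c) ^ (k - 1) * c))
           = (\<Sum>k = 0..n. if k = 1 then a 1 * c else 0)"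
    by (rule sum.cong) (auto simp: power_0_left)
  also have "\<dots> = a 1 * c"
    using assms by simp
  finally show ?thesis .
qed

lemma log_deriv_exp_times_at_0:
  fixes P :: "real \<Rightarrow> real"
  assumes "(P has_real_derivative d) (at 0)" and "P 0 = 1" and "C \<noteq> 0"
  shows "deriv (\<lambda>s. C * exp (- s * b) * P s) 0 / (C * exp (- 0 * b) * P 0) = d - b"
proof -
  have "((\<lambda>s. C * exp (- s * b)) has_real_derivative C * (- b)) (at 0)"
    by (auto intro!: derivative_eq_intros)
  from DERIV_mult[OF this assms(1)]
  have "((\<lambda>s. C * exp (- s * b) * P s) has_real_derivative C * (- b) + C * d) (at 0)"
    using assms(2) by (simp add: mult.commute)
  then show ?thesis
    using assms(2,3) by (simp add: DERIV_imp_deriv field_simps)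
qed

lemma fact_pred_div_fact:
  assumes "r \<ge> 1"
  shows "fact (r - 1) / fact r = 1 / (real r :: real)"
proof -
  have "fact r = real r * fact (r - 1)"
    using assms by (metis Suc_diff_1 fact_Suc less_le_trans of_nat_Suc zero_less_one)
  then show ?thesis
    using assms by (simp add: field_simps)
qed

lemma fjoint_factorization:
  "fjoint N t r K x y s =
     fbeta (K - (N - t) + 1) r x * fbeta (K - (N - t) + r + 1) (N - t - r) y * exp (- s * (x * y)) *
     (\<Sum>k = 0..K - (N - t) + 1.
        real ((K - (N - t) + 1) choose k) * fact (r - 1) / fact (r + k - 1) * (s * (y * (1 - x))) ^ k)"
  unfolding fjoint_def Let_def by (simp add: mult.assoc)

theorem proposition3:
  fixes N t r K :: nat and p1 p2 :: real
  assumes "t \<ge> 1" and "r \<ge> 1" and "t + r < N" and "K \<ge> N"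
    and "p1 \<in> {0<..1}" and "p2 \<in> {0<..1}"
    and "fjoint N t r K p1 p2 0 \<noteq> 0"
  shows "t_LMPID N t r K p1 p2
           = real (K - (N - t) + 1) / real r * p2 * (1 - p1) - p1 * p2"
proof -
  define n0 where "n0 = K - (N - t) + 1"
  define a :: "nat \<Rightarrow> real" where "a k = real (n0 choose k) * fact (r - 1) / fact (r + k - 1)" for k
  define P where "P s = (\<Sum>k = 0..n0. a k * (s * (p2 * (1 - p1))) ^ k)" for s
  define C where "C = fbeta n0 r p1 * fbeta (K - (N - t) + r + 1) (N - t - r) p2"
  have fjoint_eq: "fjoint N t r K p1 p2 s = C * exp (- s * (p1 * p2)) * P s" for s
    unfolding fjoint_factorization C_def P_def a_def n0_def ..
  have P0: "P 0 = 1"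
    unfolding P_def sum_power_scaled_at_0 a_def using assms(2) by simp
  have "(P has_real_derivative a 1 * (p2 * (1 - p1))) (at 0)"
    unfolding P_def by (rule has_real_derivative_sum_power_scaled_at_0) (simp add: n0_def)
  moreover have "C \<noteq> 0"
    using assms(7) P0 by (simp add: fjoint_eq)
  ultimately have "t_LMPID N t r K p1 p2 = a 1 * (p2 * (1 - p1)) - p1 * p2"
    unfolding t_LMPID_def fjoint_eq using log_deriv_exp_times_at_0 P0 by blast
  moreover have "a 1 = real n0 / real r"
    unfolding a_def using fact_pred_div_fact[OF assms(2)] by (simp add: field_simps)
  ultimately show ?thesis
    unfolding n0_def by simp
qed

end
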